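(* Let $n\ge 1$ be an integer and $0<p_{\mathrm{tot}}\le 1$. Let $\mathcal X$ be the family of random variables $$\mathcal X=\Big\{\max\big(\{X_i\}_{i=1}^n\big)\ \Big|\ X_i\sim\mathrm{geom}(p_i)\text{ independent},\ 0<p_i\le 1,\ \prod_{i=1}^n p_i=p_{\mathrm{tot}}\Big\}.$$ Let $X_{\mathrm{hom}}\in\mathcal X$ be the member with $p_1=\dots=p_n$, i.e. $X_{\mathrm{hom}}=\max(\{X_{\mathrm{hom},i}\}_{i=1}^n)$ with the $X_{\mathrm{hom},i}$ independent and $X_{\mathrm{hom},i}\sim\mathrm{geom}(\sqrt[n]{p_{\mathrm{tot}}})$. Then for every $X\in\mathcal X$ we have $X\ge_{\mathrm{st}}X_{\mathrm{hom}}$.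
   Context: $\mathrm{geom}(p)$ denotes the geometric distribution on $\{1,2,3,\dots\}$ with success probability $p$: $\Pr(X=k)=(1-p)^{k-1}p$, so $\Pr(X\le k)=1-(1-p)^k$. For random variables $X,Y$, $X\ge_{\mathrm{st}}Y$ ($X$ stochastically dominates $Y$) means $\Pr(X>z)\ge\Pr(Y>z)$ for all real $z$. *)

theory Defs
  imports "HOL-Probability.Probability"
begin

text \<open>geom(p) on {1,2,3,...}: number of trials up to and including the first success.
  The library's geometric_pmf counts failures (support {0,1,...}), so we shift by one.\<close>
definition geom :: "real \<Rightarrow> nat pmf" where
  "geom p = map_pmf Suc (geometric_pmf p)"

definition max_geom :: "nat \<Rightarrow> (nat \<Rightarrow> real) \<Rightarrow> nat pmf" where
  "max_geom n ps = map_pmf (\<lambda>f. Max (f ` {..<n})) (Pi_pmf {..<n} 0 (\<lambda>i. geom (ps i)))"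

definition stoch_dom :: "nat pmf \<Rightarrow> nat pmf \<Rightarrow> bool" where
  "stoch_dom X Y \<longleftrightarrow> (\<forall>z::real. measure_pmf.prob X {x. real x > z} \<ge> measure_pmf.prob Y {x. real x > z})"

end

theory Submission
  imports Defs
begin

text \<open>The distribution function of \<open>max_geom n ps\<close> at \<open>k\<close> is \<open>\<Prod>i<n. 1 - (1 - ps i) ^ k\<close>, so it
  suffices to show that this product, under the constraint that \<open>\<Sum>i<n. ln (ps i)\<close> is fixed,
  is largest when all \<open>ps i\<close> are equal. That is Jensen's inequality, because
  \<open>x \<mapsto> ln (1 - (1 - exp x) ^ k)\<close> is concave for \<open>x \<le> 0\<close>.\<close>

lemma prob_geom_atMost:
  assumes "0 < p" "p \<le> 1"
  shows "measure_pmf.prob (geom p) {..k} = 1 - (1 - p) ^ k"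
proof -
  have "Suc -` {..k} = {..<k}" by auto
  then have "measure_pmf.prob (geom p) {..k} = measure_pmf.prob (geometric_pmf p) {..<k}"
    by (simp add: geom_def)
  also have "\<dots> = (\<Sum>j<k. (1 - p) ^ j * p)"
    using assms by (simp add: measure_measure_pmf_finite)
  also have "\<dots> = 1 - (1 - p) ^ k"
    using one_diff_power_eq[of "1 - p" k] by (simp add: sum_distrib_right[symmetric])
  finally show ?thesis .
qed

lemma prob_Max_Pi_pmf_atMost:
  fixes p :: "'a \<Rightarrow> 'b::linorder pmf"
  assumes "finite I" "I \<noteq> {}"
  shows "measure_pmf.prob (map_pmf (\<lambda>f. Max (f ` I)) (Pi_pmf I d p)) {..k}
       = (\<Prod>i\<in>I. measure_pmf.prob (p i) {..k})"
proof -
  let ?P = "Pi_pmf I d p"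
  have Max_le: "Max (f ` I) \<le> k \<longleftrightarrow> (\<forall>i\<in>I. f i \<le> k)" for f :: "'a \<Rightarrow> 'b"
    using assms by simp
  have "(\<lambda>f. Max (f ` I)) -` {..k} \<inter> set_pmf ?P = PiE_dflt I d (\<lambda>_. {..k}) \<inter> set_pmf ?P"
    using set_Pi_pmf_subset[of I d p] assms by (auto simp: PiE_dflt_def Max_le)
  then have "measure_pmf.prob ?P ((\<lambda>f. Max (f ` I)) -` {..k})
           = measure_pmf.prob ?P (PiE_dflt I d (\<lambda>_. {..k}))"
    by (metis measure_Int_set_pmf)
  then show ?thesis
    using assms by (simp add: measure_Pi_pmf_PiE_dflt)
qed

lemma prob_max_geom_atMost:
  assumes "\<forall>i<n. 0 < ps i \<and> ps i \<le> 1" "0 < n"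
  shows "measure_pmf.prob (max_geom n ps) {..k} = (\<Prod>i<n. 1 - (1 - ps i) ^ k)"
  unfolding max_geom_def using assms
  by (subst prob_Max_Pi_pmf_atMost) (auto simp: prob_geom_atMost)

lemma stoch_domI:
  assumes "\<And>k. measure_pmf.prob X {..k} \<le> measure_pmf.prob Y {..k}"
  shows "stoch_dom X Y"
  unfolding stoch_dom_def
proof
  have compl: "measure_pmf.prob M (- {..k}) = 1 - measure_pmf.prob M {..k}" for M :: "nat pmf" and k
    using measure_pmf.prob_compl[of "{..k}" M] by (simp add: Compl_eq_Diff_UNIV)
  fix z :: real
  show "measure_pmf.prob Y {x. z < real x} \<le> measure_pmf.prob X {x. z < real x}"
  proof (cases "z < 0")
    case True
    then have "{x. z < real x} = UNIV" by (auto intro: less_le_trans)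
    then show ?thesis by simp
  next
    case False
    then have "{x. z < real x} = - {..nat \<lfloor>z\<rfloor>}"
      unfolding atMost_def by (auto simp: le_nat_iff floor_less_iff le_floor_iff)
    then show ?thesis
      using assms[of "nat \<lfloor>z\<rfloor>"] compl[of X] compl[of Y] by simp
  qed
qed

lemma geometric_sum_pos:
  fixes a :: real
  assumes "0 \<le> a" "0 < k"
  shows "0 < (\<Sum>j<k. a ^ j)"
  using assms by (intro sum_pos2[of _ 0]) auto

lemma last_power_div_geometric_sum_mono:
  fixes a b :: real
  assumes "0 \<le> a" "a \<le> b" "0 < k"
  shows "a ^ (k - 1) / (\<Sum>j<k. a ^ j) \<le> b ^ (k - 1) / (\<Sum>j<k. b ^ j)"
proof -
  have "a ^ (k - 1) * b ^ j \<le> b ^ (k - 1) * a ^ j" if "j < k" for j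
  proof -
    have split: "k - 1 = j + (k - 1 - j)" using that by simp
    have "(a ^ j * b ^ j) * a ^ (k - 1 - j) \<le> (a ^ j * b ^ j) * b ^ (k - 1 - j)"
      using assms by (intro mult_left_mono power_mono) auto
    then show ?thesis
      by (subst (1 2) split) (simp add: power_add algebra_simps)
  qed
  then have "a ^ (k - 1) * (\<Sum>j<k. b ^ j) \<le> b ^ (k - 1) * (\<Sum>j<k. a ^ j)"
    unfolding sum_distrib_left by (intro sum_mono) simp
  then show ?thesis
    using assms geometric_sum_pos[of a k] geometric_sum_pos[of b k] by (simp add: divide_simps)
qed

text \<open>With \<open>a = 1 - exp x\<close>, the derivative is \<open>k a ^ (k - 1) / (\<Sum>j<k. a ^ j)\<close>, which increases
  with \<open>a\<close> and hence decreases with \<open>x\<close>.\<close>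

lemma concave_on_ln_geom_cdf_exp:
  assumes "0 < k"
  shows "concave_on {..0} (\<lambda>x. ln (1 - (1 - exp x) ^ k))"
proof -
  define r where "r a = real k * (a ^ (k - 1) / (\<Sum>j<k. a ^ j))" for a :: real
  have deriv: "((\<lambda>x. - ln (1 - (1 - exp x) ^ k)) has_real_derivative - r (1 - exp x)) (at x)"
    if "x \<le> 0" for x
  proof -
    let ?a = "1 - exp x"
    have factor: "1 - ?a ^ k = exp x * (\<Sum>j<k. ?a ^ j)"
      using one_diff_power_eq[of ?a k] by simp
    have "0 < (\<Sum>j<k. ?a ^ j)"
      using that assms by (intro geometric_sum_pos) auto
    then have pos: "0 < 1 - ?a ^ k" unfolding factor by simp
    have "((\<lambda>x. - ln (1 - (1 - exp x) ^ k)) has_real_derivative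
        - (real k * ?a ^ (k - 1) * exp x / (1 - ?a ^ k))) (at x)"
      using pos by (auto intro!: derivative_eq_intros simp: field_simps)
    also have "real k * ?a ^ (k - 1) * exp x / (1 - ?a ^ k) = r ?a"
      unfolding factor r_def by simp
    finally show ?thesis .
  qed
  have "- r (1 - exp x) \<le> - r (1 - exp y)" if "x \<le> y" "y \<le> 0" for x y
    unfolding r_def neg_le_iff_le
    by (intro mult_left_mono last_power_div_geometric_sum_mono) (use that assms in auto)
  then show ?thesis
    unfolding concave_on_def by (intro convex_on_realI[OF _ deriv]) auto
qed

text \<open>Jensen's inequality for \<open>ln \<circ> g \<circ> exp\<close> at the points \<open>ln (p i)\<close>.\<close>

lemma prod_le_power_at_geometric_mean:
  fixes g :: "real \<Rightarrow> real" and p :: "'a \<Rightarrow> real"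
  assumes "finite I" "I \<noteq> {}"
    and conc: "concave_on {..0} (\<lambda>x. ln (g (exp x)))"
    and g_pos: "\<And>x. 0 < x \<Longrightarrow> x \<le> 1 \<Longrightarrow> 0 < g x"
    and p: "\<And>i. i \<in> I \<Longrightarrow> 0 < p i \<and> p i \<le> 1"
  shows "(\<Prod>i\<in>I. g (p i)) \<le> g (root (card I) (\<Prod>i\<in>I. p i)) ^ card I"
proof -
  define m where "m = card I"
  define P where "P = (\<Prod>i\<in>I. p i)"
  have m_pos: "0 < m" using assms(1,2) by (simp add: m_def card_gt_0_iff)
  have P: "0 < P" "P \<le> 1"
    unfolding P_def using p by (simp add: prod_pos, simp add: prod_le_1 less_imp_le)
  have mean: "(\<Sum>i\<in>I. (1 / m) *\<^sub>R ln (p i)) = ln P / m"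
    unfolding P_def using assms(1) by (subst ln_prod) (auto simp: sum_divide_distrib dest!: p)
  have geo_mean: "exp (ln P / m) = root m P"
    using P m_pos by (simp add: root_powr_inverse powr_def)
  have root_P: "0 < root m P" "root m P \<le> 1"
    using P m_pos by auto
  have "(\<Sum>i\<in>I. (1 / m) * ln (g (exp (ln (p i))))) \<le> ln (g (exp (\<Sum>i\<in>I. (1 / m) *\<^sub>R ln (p i))))"
    using assms(1,2) p by (intro concave_on_sum[OF _ _ conc]) (auto simp: m_def)
  also have "(\<Sum>i\<in>I. (1 / m) * ln (g (exp (ln (p i))))) = (\<Sum>i\<in>I. ln (g (p i))) / m"
    using p by (simp add: sum_divide_distrib)
  finally have "(\<Sum>i\<in>I. ln (g (p i))) \<le> m * ln (g (root m P))"
    unfolding mean geo_mean using m_pos by (simp add: field_simps)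
  moreover have g_p: "0 < g (p i)" if "i \<in> I" for i
    using g_pos p that by blast
  ultimately have "ln (\<Prod>i\<in>I. g (p i)) \<le> ln (g (root m P) ^ m)"
    using assms(1) root_P by (subst ln_prod) (auto simp: ln_realpow dest: g_p[THEN less_imp_neq])
  then show ?thesis
    using g_p g_pos root_P by (simp add: m_def P_def prod_pos)
qed

theorem mainTheorem1:
  fixes n :: nat and p_tot :: real and ps :: "nat \<Rightarrow> real"
  assumes "n \<ge> 1"
    and "0 < p_tot" and "p_tot \<le> 1"
    and "\<forall>i<n. 0 < ps i \<and> ps i \<le> 1"
    and "(\<Prod>i<n. ps i) = p_tot"
  shows "stoch_dom (max_geom n ps) (max_geom n (\<lambda>_. root n p_tot))"
proof (rule stoch_domI)
  fix k :: nat
  have n: "0 < n" using assms(1) by simp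
  have "(\<Prod>i<n. 1 - (1 - ps i) ^ k) \<le> (1 - (1 - root n p_tot) ^ k) ^ n"
  proof (cases "k = 0")
    case False
    have "0 < 1 - (1 - q) ^ k" if "0 < q" "q \<le> 1" for q :: real
      using that False by (simp add: power_less_one_iff)
    then show ?thesis
      using prod_le_power_at_geometric_mean[of "{..<n}" "\<lambda>q. 1 - (1 - q) ^ k" ps]
        concave_on_ln_geom_cdf_exp[of k] False n assms(4,5) by (simp add: lessThan_empty_iff)
  qed simp
  moreover have "0 < root n p_tot" "root n p_tot \<le> 1"
    using n assms(2,3) by auto
  ultimately show "measure_pmf.prob (max_geom n ps) {..k}
      \<le> measure_pmf.prob (max_geom n (\<lambda>_. root n p_tot)) {..k}"
    using n assms(4) by (simp add: prob_max_geom_atMost)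
qed

end
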